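(* Let $S$ be a semigroup with finite $\mathcal{R}$-height, and let $A$ be an ideal of $S$. Then $\mathrm{H}_{\mathcal{R}}(A)\leq \mathrm{H}_{\mathcal{R}}(S)$.
   Context: For a semigroup $S$, $S^1$ denotes $S$ with an identity adjoined if necessary. Green's preorder: $a\leq_{\mathcal{R}} b$ iff $aS^1\subseteq bS^1$; $\mathcal{R}$ is the associated equivalence; the $\mathcal{R}$-height $\mathrm{H}_{\mathcal{R}}$ of a semigroup is the supremum of the cardinalities of chains in its poset of $\mathcal{R}$-classes. An ideal is a non-empty subset $A$ with $SA\cup AS\subseteq A$; $\mathrm{H}_{\mathcal{R}}(A)$ is computed in $A$ itself. *)

theory Defs
  imports Main "HOL-Library.Extended_Nat"
begin

text \<open>Green's R-preorder computed inside a subsemigroup T (a subset closed under the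
ambient multiplication): a \<le>R b iff a \<in> b T^1, i.e. a = b or a = b x for some x in T.\<close>
definition R_le :: "'a::semigroup_mult set \<Rightarrow> 'a \<Rightarrow> 'a \<Rightarrow> bool" where
  "R_le T a b \<longleftrightarrow> a = b \<or> (\<exists>x\<in>T. a = b * x)"

definition R_class :: "'a::semigroup_mult set \<Rightarrow> 'a \<Rightarrow> 'a set" where
  "R_class T a = {b \<in> T. R_le T a b \<and> R_le T b a}"

definition R_classes :: "'a::semigroup_mult set \<Rightarrow> 'a set set" where
  "R_classes T = R_class T ` T"

definition R_class_le :: "'a::semigroup_mult set \<Rightarrow> 'a set \<Rightarrow> 'a set \<Rightarrow> bool" where
  "R_class_le T X Y \<longleftrightarrow> (\<exists>a\<in>X. \<exists>b\<in>Y. R_le T a b)"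

definition R_chain :: "'a::semigroup_mult set \<Rightarrow> 'a set set \<Rightarrow> bool" where
  "R_chain T C \<longleftrightarrow> C \<subseteq> R_classes T \<and>
     (\<forall>X\<in>C. \<forall>Y\<in>C. R_class_le T X Y \<or> R_class_le T Y X)"

definition R_height :: "'a::semigroup_mult set \<Rightarrow> enat" where
  "R_height T = (SUP C\<in>{C. R_chain T C}. if finite C then enat (card C) else \<infinity>)"

definition semigroup_ideal :: "'a::semigroup_mult set \<Rightarrow> bool" where
  "semigroup_ideal A \<longleftrightarrow> A \<noteq> {} \<and> (\<forall>s a. a \<in> A \<longrightarrow> s * a \<in> A \<and> a * s \<in> A)"

end

theory Submission
  imports Defs
begin

text \<open>Sending an \<open>\<R>\<close>-class of the ideal \<open>A\<close> to the \<open>\<R>\<close>-class of \<open>S\<close> containing it maps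
chains to chains, since \<open>a \<le>\<^sub>R b\<close> in \<open>A\<close> implies \<open>a \<le>\<^sub>R b\<close> in \<open>S\<close>. It is injective on chains:
if \<open>a \<le>\<^sub>R b\<close> in \<open>A\<close> and \<open>b \<le>\<^sub>R a\<close> in \<open>S\<close>, say \<open>a = b x\<close> with \<open>x \<in> A\<close> and \<open>b = a s\<close>, then
\<open>b = b (x s) = b (x s) (x s) = a (s x s)\<close> with \<open>s x s \<in> A\<close>, so \<open>b \<le>\<^sub>R a\<close> already in \<open>A\<close>.\<close>

definition subsemigroup :: "'a::semigroup_mult set \<Rightarrow> bool" where
  "subsemigroup T \<longleftrightarrow> (\<forall>x\<in>T. \<forall>y\<in>T. x * y \<in> T)"

lemma subsemigroup_UNIV: "subsemigroup UNIV"
  by (simp add: subsemigroup_def)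

lemma subsemigroup_if_semigroup_ideal: "semigroup_ideal A \<Longrightarrow> subsemigroup A"
  by (simp add: subsemigroup_def semigroup_ideal_def)

lemma R_le_refl: "R_le T a a"
  by (simp add: R_le_def)

lemma R_le_mono: "T \<subseteq> T' \<Longrightarrow> R_le T a b \<Longrightarrow> R_le T' a b"
  unfolding R_le_def by blast

lemma R_le_trans:
  assumes "subsemigroup T" "R_le T a b" "R_le T b c"
  shows "R_le T a c"
  using assms unfolding R_le_def subsemigroup_def by (metis mult.assoc)

lemma R_le_ideal_converse:
  assumes ideal: "semigroup_ideal A" and "R_le A a b" and "R_le UNIV b a"
  shows "R_le A b a"
proof -
  consider "a = b" | "b = a" | x s where "x \<in> A" "a = b * x" "b = a * s"
    using assms(2,3) unfolding R_le_def by blast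
  then show ?thesis
  proof cases
    case 3
    have "b = b * (x * s)" using 3 by (metis mult.assoc)
    then have "b = b * (x * s) * (x * s)" by (metis mult.assoc)
    also have "\<dots> = a * (s * x * s)" using \<open>a = b * x\<close> by (simp add: mult.assoc)
    finally have "b = a * (s * x * s)" .
    moreover have "s * x * s \<in> A"
      using ideal \<open>x \<in> A\<close> unfolding semigroup_ideal_def by blast
    ultimately show ?thesis unfolding R_le_def by blast
  qed (simp_all add: R_le_refl)
qed

lemma R_class_self: "a \<in> T \<Longrightarrow> a \<in> R_class T a"
  by (simp add: R_class_def R_le_refl)

lemma R_class_cong:
  assumes "subsemigroup T" "R_le T a b" "R_le T b a"
  shows "R_class T a = R_class T b"
  using assms R_le_trans[OF assms(1)] unfolding R_class_def by blast

lemma R_classes_subset: "X \<in> R_classes T \<Longrightarrow> X \<subseteq> T"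
  by (auto simp: R_classes_def R_class_def)

lemma R_classes_nonempty: "X \<in> R_classes T \<Longrightarrow> X \<noteq> {}"
  by (auto simp: R_classes_def dest: R_class_self)

lemma R_classes_eq_R_class:
  assumes "subsemigroup T" "X \<in> R_classes T" "a \<in> X"
  shows "X = R_class T a"
proof -
  obtain c where "c \<in> T" "X = R_class T c"
    using assms(2) unfolding R_classes_def by blast
  with assms show ?thesis
    using R_class_cong[OF assms(1)] unfolding R_class_def by blast
qed

lemma R_class_le_iff:
  assumes "subsemigroup T" "X \<in> R_classes T" "Y \<in> R_classes T" "a \<in> X" "b \<in> Y"
  shows "R_class_le T X Y \<longleftrightarrow> R_le T a b"
proof
  assume "R_class_le T X Y"
  then obtain a' b' where "a' \<in> X" "b' \<in> Y" "R_le T a' b'"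
    unfolding R_class_le_def by blast
  moreover have "R_le T a a'" "R_le T b' b"
    using R_classes_eq_R_class[OF assms(1,2,4)] R_classes_eq_R_class[OF assms(1,3,5)]
      \<open>a' \<in> X\<close> \<open>b' \<in> Y\<close> unfolding R_class_def by auto
  ultimately show "R_le T a b"
    using R_le_trans[OF assms(1)] by blast
qed (use assms(4,5) R_class_le_def in blast)

lemma R_classes_eq_iff:
  assumes "subsemigroup T" "X \<in> R_classes T" "Y \<in> R_classes T" "a \<in> X" "b \<in> Y"
  shows "X = Y \<longleftrightarrow> R_le T a b \<and> R_le T b a"
proof
  assume "X = Y"
  then show "R_le T a b \<and> R_le T b a"
    using R_classes_eq_R_class[OF assms(1,2,4)] assms(5) unfolding R_class_def by blast
next
  assume "R_le T a b \<and> R_le T b a"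
  then show "X = Y"
    using R_classes_eq_R_class[OF assms(1,2,4)] R_classes_eq_R_class[OF assms(1,3,5)]
      R_class_cong[OF assms(1)] by blast
qed

lemma R_height_le_if_chain_embedding:
  assumes "\<And>C. R_chain T C \<Longrightarrow> inj_on f C \<and> R_chain T' (f ` C)"
  shows "R_height T \<le> R_height T'"
  unfolding R_height_def
proof (rule SUP_least)
  fix C assume "C \<in> {C. R_chain T C}"
  then have "inj_on f C" "R_chain T' (f ` C)"
    using assms by auto
  then have "(if finite C then enat (card C) else \<infinity>)
      = (if finite (f ` C) then enat (card (f ` C)) else \<infinity>)"
    by (simp add: card_image finite_image_iff)
  also have "\<dots> \<le> (SUP C'\<in>{C'. R_chain T' C'}. if finite C' then enat (card C') else \<infinity>)"
    using \<open>R_chain T' (f ` C)\<close> by (intro SUP_upper) simp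
  finally show "(if finite C then enat (card C) else \<infinity>)
      \<le> (SUP C'\<in>{C'. R_chain T' C'}. if finite C' then enat (card C') else \<infinity>)" .
qed

definition ambient_R_class :: "'a::semigroup_mult set \<Rightarrow> 'a set" where
  "ambient_R_class X = R_class UNIV (SOME a. a \<in> X)"

lemma ambient_R_class_eq:
  assumes "subsemigroup T" "X \<in> R_classes T" "a \<in> X"
  shows "ambient_R_class X = R_class UNIV a"
proof -
  have "(SOME a. a \<in> X) \<in> X"
    using assms(3) by (rule someI)
  then have "R_le T a (SOME a. a \<in> X)" "R_le T (SOME a. a \<in> X) a"
    using R_classes_eq_iff[OF assms(1,2,2,3)] by blast+
  then show ?thesis
    unfolding ambient_R_class_def
    by (intro R_class_cong subsemigroup_UNIV) (auto intro: R_le_mono)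
qed

lemma R_chain_ambient_R_class:
  assumes ideal: "semigroup_ideal A" and chain: "R_chain A C"
  shows "inj_on ambient_R_class C" and "R_chain UNIV (ambient_R_class ` C)"
proof -
  have sub: "subsemigroup A"
    using ideal by (rule subsemigroup_if_semigroup_ideal)
  have classes: "C \<subseteq> R_classes A"
    using chain unfolding R_chain_def by blast
  have rep: "\<exists>a. a \<in> X \<and> ambient_R_class X = R_class UNIV a" if "X \<in> C" for X
    using R_classes_nonempty[of X A] ambient_R_class_eq[OF sub, of X] that classes by blast
  have comparable: "R_le A a b \<or> R_le A b a" if "X \<in> C" "Y \<in> C" "a \<in> X" "b \<in> Y" for X Y a b
  proof -
    have "X \<in> R_classes A" "Y \<in> R_classes A"
      using classes that(1,2) by auto
    moreover have "R_class_le A X Y \<or> R_class_le A Y X"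
      using chain that(1,2) unfolding R_chain_def by blast
    ultimately show ?thesis
      using R_class_le_iff[OF sub _ _ that(3,4)] R_class_le_iff[OF sub _ _ that(4,3)] by blast
  qed
  show "inj_on ambient_R_class C"
  proof (rule inj_onI)
    fix X Y assume "X \<in> C" "Y \<in> C" and eq: "ambient_R_class X = ambient_R_class Y"
    obtain a b where a: "a \<in> X" "ambient_R_class X = R_class UNIV a"
      and b: "b \<in> Y" "ambient_R_class Y = R_class UNIV b"
      using rep \<open>X \<in> C\<close> \<open>Y \<in> C\<close> by metis
    have "R_le UNIV a b" "R_le UNIV b a"
      using eq a b R_class_self[of b UNIV] unfolding R_class_def by auto
    then have "R_le A a b \<and> R_le A b a"
      using comparable[OF \<open>X \<in> C\<close> \<open>Y \<in> C\<close> a(1) b(1)] R_le_ideal_converse[OF ideal] by blast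
    then show "X = Y"
      using R_classes_eq_iff[OF sub] classes \<open>X \<in> C\<close> \<open>Y \<in> C\<close> a(1) b(1) by blast
  qed
  show "R_chain UNIV (ambient_R_class ` C)"
    unfolding R_chain_def
  proof (intro conjI ballI)
    show "ambient_R_class ` C \<subseteq> R_classes UNIV"
      using rep unfolding R_classes_def by blast
  next
    fix U V assume "U \<in> ambient_R_class ` C" "V \<in> ambient_R_class ` C"
    then obtain X Y a b where "X \<in> C" "Y \<in> C" "a \<in> X" "b \<in> Y"
      and "U = R_class UNIV a" "V = R_class UNIV b"
      using rep by blast
    moreover have "R_le UNIV a b \<or> R_le UNIV b a"
      using comparable[OF calculation(1-4)] R_le_mono[of A UNIV] by blast
    ultimately show "R_class_le UNIV U V \<or> R_class_le UNIV V U"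
      unfolding R_class_le_def using R_class_self[of _ UNIV] by blast
  qed
qed

theorem corollary3p15:
  fixes A :: "'a::semigroup_mult set"
  assumes "R_height (UNIV :: 'a set) < \<infinity>"
    and "semigroup_ideal A"
  shows "R_height A \<le> R_height (UNIV :: 'a set)"
  using R_chain_ambient_R_class[OF assms(2)]
  by (intro R_height_le_if_chain_embedding[of A ambient_R_class]) blast

end
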